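(* Let $\mathcal{F}=(f_1,\dots,f_M)$ be a random frame of $\mathbb{R}^N$ whose vectors are i.i.d. Gaussian vectors in $\mathbb{R}^N$ (distribution $\mathcal{N}(0,I_N)$), organized into $K$ disjoint pools $I_1,\dots,I_K$ (disjoint, union $\{1,\dots,M\}$) each of size $L$. Let the Maxout operator be $MO(x)=\big(\max_{j\in I_k}\langle x,f_j\rangle\big)_{k=1}^K$. Then, with probability $1$, $MO$ is injective on $\mathbb{R}^N$ if $K\ge 2N+1$. *)

theory Defs
  imports "HOL-Probability.Probability"
begin

definition std_gauss :: "real measure" where
  "std_gauss = density lborel std_normal_density"

text \<open>Probability space of a random frame of M vectors in R^N (N = CARD('n)):
  frame vector j (j < M) has i.i.d. N(0,1) coordinates, i.e. f_j ~ N(0, I_N),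
  and the vectors are independent.\<close>
definition gauss_frame_space :: "nat \<Rightarrow> (nat \<Rightarrow> 'n::finite \<Rightarrow> real) measure" where
  "gauss_frame_space M = PiM {..<M} (\<lambda>_. PiM UNIV (\<lambda>_. std_gauss))"

definition frame_vec :: "(nat \<Rightarrow> 'n::finite \<Rightarrow> real) \<Rightarrow> nat \<Rightarrow> real^'n" where
  "frame_vec \<omega> j = (\<chi> i. \<omega> j i)"

definition maxout :: "(nat \<Rightarrow> nat set) \<Rightarrow> nat \<Rightarrow> (nat \<Rightarrow> real^'n) \<Rightarrow> real^'n \<Rightarrow> (nat \<Rightarrow> real)" where
  "maxout I K f x = (\<lambda>k\<in>{..<K}. Max ((\<lambda>j. x \<bullet> f j) ` I k))"

end

theory Submission
  imports Defs
begin

text \<open>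
  Suppose \<open>MO(x) = MO(y)\<close>. In each pool \<open>k\<close> choose indices \<open>a k\<close> and \<open>b k\<close> at which
  \<open>\<langle>x, f j\<rangle>\<close> and \<open>\<langle>y, f j\<rangle>\<close> respectively are maximal; then
  \<open>\<langle>x, f (a k)\<rangle> = \<langle>y, f (b k)\<rangle>\<close> for every pool. If \<open>a k = b k\<close> for at least \<open>N\<close> pools, these
  give \<open>N\<close> equations \<open>\<langle>x - y, f (a k)\<rangle> = 0\<close> with distinct frame vectors, which almost surely
  form a basis, so \<open>x = y\<close>. Otherwise more than \<open>K - N \<ge> N\<close> pools have \<open>a k \<noteq> b k\<close>; \<open>N\<close> of
  them together with \<open>N\<close> further pools give a \<open>2N \<times> 2N\<close> linear system in \<open>(x, y)\<close> whose
  matrix is almost surely nonsingular, so \<open>x = y = 0\<close>.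

  Each of the finitely many determinants involved is a polynomial in the Gaussian coordinates
  that is nonzero somewhere, and such a polynomial vanishes only on a null set: integrating out
  one coordinate at a time, almost every axis-parallel line meets its zero set in finitely many
  points.
\<close>

section \<open>Polynomials in independent Gaussian coordinates\<close>

inductive_set polynomial_in :: "('v \<Rightarrow> 'a \<Rightarrow> real) \<Rightarrow> ('a \<Rightarrow> real) set" for X where
  const: "(\<lambda>_. c) \<in> polynomial_in X"
| var: "X v \<in> polynomial_in X"
| add: "p \<in> polynomial_in X \<Longrightarrow> q \<in> polynomial_in X \<Longrightarrow> (\<lambda>x. p x + q x) \<in> polynomial_in X"
| mult: "p \<in> polynomial_in X \<Longrightarrow> q \<in> polynomial_in X \<Longrightarrow> (\<lambda>x. p x * q x) \<in> polynomial_in X"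

lemma polynomial_in_measurable:
  assumes "\<And>v. X v \<in> borel_measurable M" and "p \<in> polynomial_in X"
  shows "p \<in> borel_measurable M"
  using assms(2) by induction (use assms(1) in auto)

lemma polynomial_in_uminus:
  assumes "p \<in> polynomial_in X"
  shows "(\<lambda>x. - p x) \<in> polynomial_in X"
  using polynomial_in.mult[OF polynomial_in.const[of "-1"] assms] by simp

lemma polynomial_in_sum:
  assumes "finite A" and "\<And>a. a \<in> A \<Longrightarrow> f a \<in> polynomial_in X"
  shows "(\<lambda>x. \<Sum>a\<in>A. f a x) \<in> polynomial_in X"
  using assms by (induction A rule: finite_induct) (auto intro: polynomial_in.intros)

lemma polynomial_in_prod:
  assumes "finite A" and "\<And>a. a \<in> A \<Longrightarrow> f a \<in> polynomial_in X"
  shows "(\<lambda>x. \<Prod>a\<in>A. f a x) \<in> polynomial_in X"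
  using assms by (induction A rule: finite_induct) (auto intro: polynomial_in.intros)

lemma polynomial_in_det:
  fixes A :: "'a \<Rightarrow> real^'m::finite^'m"
  assumes "\<And>r c. (\<lambda>x. A x $ r $ c) \<in> polynomial_in X"
  shows "(\<lambda>x. det (A x)) \<in> polynomial_in X"
  unfolding det_def
  by (intro polynomial_in_sum finite_permutations polynomial_in.mult polynomial_in.const
      polynomial_in_prod finite assms)

lemma polynomial_in_compose:
  assumes "p \<in> polynomial_in X" and "\<And>v. (\<lambda>x. X v (g x)) \<in> polynomial_in Y"
  shows "(\<lambda>x. p (g x)) \<in> polynomial_in Y"
  using assms(1) by induction (use assms(2) in \<open>auto intro: polynomial_in.intros\<close>)

lemma polynomial_in_univariate:
  assumes "p \<in> polynomial_in (\<lambda>_::unit. \<lambda>y::real. y)"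
  shows "\<exists>q. p = poly q"
  using assms
proof induction
  case (const c)
  show ?case by (rule exI[of _ "[:c:]"]) auto
next
  case (var v)
  show ?case by (rule exI[of _ "[:0, 1:]"]) auto
next
  case (add p q)
  then obtain a b where "p = poly a" "q = poly b" by blast
  then show ?case by (intro exI[of _ "a + b"]) (auto simp: poly_add)
next
  case (mult p q)
  then obtain a b where "p = poly a" "q = poly b" by blast
  then show ?case by (intro exI[of _ "a * b"]) (auto simp: poly_mult)
qed

lemma polynomial_in_coordinate: "(\<lambda>x. x i) \<in> polynomial_in (\<lambda>i x. x i)"
  by (rule polynomial_in.var)

lemma polynomial_in_frame_coordinate: "(\<lambda>w. w j i) \<in> polynomial_in (\<lambda>(j, i) w. w j i)"
  using polynomial_in.var[of "\<lambda>(j, i) w. w j i" "(j, i)"] by simp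

lemma AE_PiM_nonzero:
  fixes M :: "'i \<Rightarrow> 'a measure" and P :: "(('i \<Rightarrow> 'a) \<Rightarrow> real) set"
  assumes "\<And>i. sigma_finite_measure (M i)"
    and measurable: "\<And>p J. p \<in> P \<Longrightarrow> p \<in> borel_measurable (PiM J M)"
    and upd_closed: "\<And>p j c. p \<in> P \<Longrightarrow> (\<lambda>w. p (w(j := c))) \<in> P"
    and slice: "\<And>p x j c. p \<in> P \<Longrightarrow> p (x(j := c)) \<noteq> 0 \<Longrightarrow> AE y in M j. p (x(j := y)) \<noteq> 0"
    and "finite J" and "p \<in> P" and "\<And>w w'. (\<forall>j\<in>J. w j = w' j) \<Longrightarrow> p w = p w'"
    and "p w0 \<noteq> 0"
  shows "AE w in PiM J M. p w \<noteq> 0"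
  using assms(5-)
proof (induction J arbitrary: p w0 rule: finite_induct)
  case empty
  then show ?case by (intro AE_I2) (metis empty_iff)
next
  case (insert j J)
  interpret product_sigma_finite M
    by (simp add: product_sigma_finite_def assms(1))
  \<comment> \<open>Freezing coordinate j at w0 j gives a function of the other coordinates, nonzero a.e. by
    induction; wherever it is nonzero, the fibre of the zero set of p along coordinate j is null.\<close>
  define q where "q w = p (w(j := w0 j))" for w
  have "AE w in PiM J M. q w \<noteq> 0"
  proof (rule insert.IH)
    show "q \<in> P" unfolding q_def using insert.prems(1) upd_closed by blast
    show "q w = q w'" if "\<forall>i\<in>J. w i = w' i" for w w'
      unfolding q_def using that by (intro insert.prems(2)) auto
    show "q w0 \<noteq> 0" unfolding q_def using insert.prems(3) by simp
  qed
  define Z where "Z = {w \<in> space (PiM (insert j J) M). p w = 0}"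
  have "p \<in> borel_measurable (PiM (insert j J) M)" using measurable insert.prems(1) by blast
  then have Z: "Z \<in> sets (PiM (insert j J) M)" unfolding Z_def by measurable
  from \<open>AE w in PiM J M. q w \<noteq> 0\<close>
  have fibres: "AE x in PiM J M. (\<integral>\<^sup>+ y. indicator Z (x(j := y)) \<partial>M j) = 0"
  proof (rule AE_mp, intro AE_I2 impI)
    fix x assume "q x \<noteq> 0"
    then have "AE y in M j. p (x(j := y)) \<noteq> 0"
      unfolding q_def using slice[OF insert.prems(1)] by fastforce
    then have "AE y in M j. indicator Z (x(j := y)) = (0::ennreal)"
      by (rule AE_mp) (auto simp: Z_def)
    then show "(\<integral>\<^sup>+ y. indicator Z (x(j := y)) \<partial>M j) = 0"
      by (simp add: nn_integral_cong_AE)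
  qed
  have "emeasure (PiM (insert j J) M) Z = (\<integral>\<^sup>+ w. indicator Z w \<partial>PiM (insert j J) M)"
    using Z by simp
  also have "\<dots> = (\<integral>\<^sup>+ x. (\<integral>\<^sup>+ y. indicator Z (x(j := y)) \<partial>M j) \<partial>PiM J M)"
    using Z insert by (intro product_nn_integral_insert) auto
  also have "\<dots> = 0"
    using fibres by (simp add: nn_integral_cong_AE)
  finally have "Z \<in> null_sets (PiM (insert j J) M)" using Z by auto
  then show ?case by (rule AE_I') (auto simp: Z_def)
qed

lemma prob_space_std_gauss: "prob_space std_gauss"
  unfolding std_gauss_def by (rule prob_space_normal_density) simp

lemma space_std_gauss [simp]: "space std_gauss = UNIV"
  unfolding std_gauss_def by simp

lemma sets_std_gauss [simp]: "sets std_gauss = sets borel"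
  unfolding std_gauss_def by simp

lemma AE_std_gauss_poly_nonzero:
  assumes "q \<noteq> 0"
  shows "AE y in std_gauss. poly q y \<noteq> 0"
proof -
  have "AE y in lborel. y \<notin> {y. poly q y = 0}"
    using assms by (intro AE_not_in countable_imp_null_set_lborel countable_finite poly_roots_finite)
  then show ?thesis
    unfolding std_gauss_def by (subst AE_density) auto
qed

abbreviation std_gauss_vec :: "('n::finite \<Rightarrow> real) measure" where
  "std_gauss_vec \<equiv> PiM UNIV (\<lambda>_. std_gauss)"

lemma space_std_gauss_vec [simp]: "space std_gauss_vec = UNIV"
  by (auto simp: space_PiM PiE_def extensional_def)

lemma measurable_PiM_coordinate:
  assumes "\<And>i. sets (M i) = sets N" and "space N = UNIV"
  shows "(\<lambda>x. x i) \<in> measurable (PiM J M) N"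
proof (cases "i \<in> J")
  case True
  then show ?thesis
    using measurable_component_singleton[OF True, of M] assms(1) by (simp cong: measurable_cong_sets)
next
  case False
  then have "x i = undefined" if "x \<in> space (PiM J M)" for x
    using that by (auto simp: space_PiM PiE_def extensional_def)
  then show ?thesis
    using assms(2) by (subst measurable_cong[where g = "\<lambda>_. undefined"]) auto
qed

lemma AE_std_gauss_vec_polynomial_nonzero:
  fixes p :: "('n::finite \<Rightarrow> real) \<Rightarrow> real"
  assumes "p \<in> polynomial_in (\<lambda>i x. x i)" and "p x0 \<noteq> 0"
  shows "AE x in std_gauss_vec. p x \<noteq> 0"
proof (rule AE_PiM_nonzero[where P = "polynomial_in (\<lambda>i x. x i)"])
  show "sigma_finite_measure std_gauss"
    by (rule prob_space_imp_sigma_finite[OF prob_space_std_gauss])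
  show "p \<in> borel_measurable (PiM J (\<lambda>_. std_gauss))"
    if "p \<in> polynomial_in (\<lambda>i x. x i)" for p :: "('n \<Rightarrow> real) \<Rightarrow> real" and J
    using that by (rule polynomial_in_measurable[rotated]) (rule measurable_PiM_coordinate; simp)
  show "(\<lambda>w. p (w(j := c))) \<in> polynomial_in (\<lambda>i x. x i)"
    if "p \<in> polynomial_in (\<lambda>i x. x i)" for p :: "('n \<Rightarrow> real) \<Rightarrow> real" and j c
    using that
  proof (rule polynomial_in_compose)
    show "(\<lambda>w. (w(j := c)) i) \<in> polynomial_in (\<lambda>i x. x i)" for i
      by (cases "i = j") (simp_all add: polynomial_in.const polynomial_in_coordinate)
  qed
  show "AE y in std_gauss. p (x(j := y)) \<noteq> 0"
    if "p \<in> polynomial_in (\<lambda>i x. x i)" and "p (x(j := c)) \<noteq> 0"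
    for p :: "('n \<Rightarrow> real) \<Rightarrow> real" and x j c
  proof -
    have "(\<lambda>y. p (x(j := y))) \<in> polynomial_in (\<lambda>_::unit. \<lambda>y. y)"
      using that(1)
    proof (rule polynomial_in_compose)
      have "(\<lambda>y. y) \<in> polynomial_in (\<lambda>_::unit. \<lambda>y::real. y)"
        by (rule polynomial_in.var)
      then show "(\<lambda>y. (x(j := y)) i) \<in> polynomial_in (\<lambda>_::unit. \<lambda>y. y)" for i
        by (cases "i = j") (simp_all add: polynomial_in.const)
    qed
    then obtain q where q: "(\<lambda>y. p (x(j := y))) = poly q"
      using polynomial_in_univariate by blast
    with that(2) have "q \<noteq> 0" by (metis poly_0)
    then show ?thesis using AE_std_gauss_poly_nonzero[of q] fun_cong[OF q] by simp
  qed
  show "p w = p w'" if "\<forall>j\<in>UNIV. w j = w' j" for w w'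
  proof -
    from that have "w = w'" by (simp add: fun_eq_iff)
    then show ?thesis by simp
  qed
  show "finite (UNIV :: 'n set)" by simp
qed (fact assms)+

lemma gauss_frame_space_eq: "gauss_frame_space M = PiM {..<M} (\<lambda>_. std_gauss_vec)"
  unfolding gauss_frame_space_def ..

lemma AE_gauss_frame_polynomial_nonzero:
  fixes p :: "(nat \<Rightarrow> 'n::finite \<Rightarrow> real) \<Rightarrow> real"
  assumes "p \<in> polynomial_in (\<lambda>(j, i) w. w j i)"
    and "\<And>w w'. (\<forall>j<M. w j = w' j) \<Longrightarrow> p w = p w'" and "p w0 \<noteq> 0"
  shows "AE w in gauss_frame_space M. p w \<noteq> 0"
  unfolding gauss_frame_space_eq
proof (rule AE_PiM_nonzero[where P = "polynomial_in (\<lambda>(j, i) w. w j i)"])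
  show "sigma_finite_measure (std_gauss_vec :: ('n \<Rightarrow> real) measure)"
    by (intro prob_space_imp_sigma_finite prob_space_PiM prob_space_std_gauss)
  show "p \<in> borel_measurable (PiM J (\<lambda>_. std_gauss_vec))"
    if "p \<in> polynomial_in (\<lambda>(j, i) w. w j i)" for p :: "(nat \<Rightarrow> 'n \<Rightarrow> real) \<Rightarrow> real" and J
    using that
  proof (rule polynomial_in_measurable[rotated], clarsimp split: prod.split)
    fix j and i :: 'n
    have "(\<lambda>w. w j) \<in> measurable (PiM J (\<lambda>_. std_gauss_vec)) (std_gauss_vec :: ('n \<Rightarrow> real) measure)"
      by (rule measurable_PiM_coordinate) auto
    moreover have "(\<lambda>x. x i) \<in> borel_measurable (std_gauss_vec :: ('n \<Rightarrow> real) measure)"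
      by (rule measurable_PiM_coordinate) auto
    ultimately show "(\<lambda>w. w j i) \<in> borel_measurable (PiM J (\<lambda>_. std_gauss_vec))"
      by (rule measurable_compose)
  qed
  show "(\<lambda>w. p (w(j := c))) \<in> polynomial_in (\<lambda>(j, i) w. w j i)"
    if "p \<in> polynomial_in (\<lambda>(j, i) w. w j i)"
    for p :: "(nat \<Rightarrow> 'n \<Rightarrow> real) \<Rightarrow> real" and j c
    using that
  proof (rule polynomial_in_compose)
    show "(\<lambda>w. (\<lambda>(j, i) w. w j i) v (w(j := c))) \<in> polynomial_in (\<lambda>(j, i) w. w j i)" for v
    proof (cases v)
      case (Pair j' i)
      then show ?thesis
        by (cases "j' = j") (simp_all add: polynomial_in.const polynomial_in_frame_coordinate)
    qed
  qed
  show "AE y in std_gauss_vec. p (x(j := y)) \<noteq> 0"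
    if "p \<in> polynomial_in (\<lambda>(j, i) w. w j i)" and "p (x(j := c)) \<noteq> 0"
    for p :: "(nat \<Rightarrow> 'n \<Rightarrow> real) \<Rightarrow> real" and x j c
  proof (rule AE_std_gauss_vec_polynomial_nonzero)
    show "(\<lambda>y. p (x(j := y))) \<in> polynomial_in (\<lambda>i y. y i)"
      using that(1)
    proof (rule polynomial_in_compose)
      show "(\<lambda>y. (\<lambda>(j, i) w. w j i) v (x(j := y))) \<in> polynomial_in (\<lambda>i y. y i)" for v
      proof (cases v)
        case (Pair j' i)
        then show ?thesis
          by (cases "j' = j") (simp_all add: polynomial_in.const polynomial_in_coordinate)
      qed
    qed
    show "p (x(j := c)) \<noteq> 0" by (fact that(2))
  qed
  show "p w = p w'" if "\<forall>j\<in>{..<M}. w j = w' j" for w w'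
    using that by (intro assms(2)) simp
  show "finite {..<M}" by simp
qed (fact assms)+

section \<open>Generic frames\<close>

lemma det_nonzero_iff_trivial_kernel:
  fixes A :: "'a::field^'n^'n"
  shows "det A \<noteq> 0 \<longleftrightarrow> (\<forall>x. A *v x = 0 \<longrightarrow> x = 0)"
  by (simp add: invertible_det_nz[symmetric] invertible_left_inverse matrix_left_invertible_ker)

lemma sum_UNIV_sum_type:
  fixes f :: "'a::finite + 'b::finite \<Rightarrow> 'c::comm_monoid_add"
  shows "(\<Sum>r\<in>UNIV. f r) = (\<Sum>i\<in>UNIV. f (Inl i)) + (\<Sum>i\<in>UNIV. f (Inr i))"
  using sum.Plus[of "UNIV :: 'a set" "UNIV :: 'b set" f] by (simp add: comp_def)

lemma finite_bounded_maps: "finite {\<sigma> :: 'a::finite \<Rightarrow> nat. \<forall>r. \<sigma> r < M}"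
  using finite_set_of_finite_funs[of "UNIV :: 'a set" "{..<M}" undefined] by simp

definition frame_rows :: "(nat \<Rightarrow> 'n::finite \<Rightarrow> real) \<Rightarrow> ('m \<Rightarrow> nat) \<Rightarrow> real^'n^'m" where
  "frame_rows w \<sigma> = (\<chi> r. frame_vec w (\<sigma> r))"

text \<open>Row \<open>r\<close> encodes the equation \<open>\<langle>x, f (\<alpha> r)\<rangle> = \<langle>y, f (\<beta> r)\<rangle>\<close> in the unknown \<open>(x, y)\<close>.\<close>
definition frame_pair_rows ::
    "(nat \<Rightarrow> 'n::finite \<Rightarrow> real) \<Rightarrow> ('n + 'n \<Rightarrow> nat) \<Rightarrow> ('n + 'n \<Rightarrow> nat) \<Rightarrow> real^('n + 'n)^('n + 'n)"
  where "frame_pair_rows w \<alpha> \<beta> = (\<chi> r c. case c of Inl i \<Rightarrow> w (\<alpha> r) i | Inr i \<Rightarrow> - w (\<beta> r) i)"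

text \<open>Each row comes from its own pool; the rows \<open>Inr i\<close> come from pools where the two
  maximisers differ, the rows \<open>Inl i\<close> from arbitrary pools.\<close>
definition disjoint_index_pairs :: "nat \<Rightarrow> (('n::finite + 'n \<Rightarrow> nat) \<times> ('n + 'n \<Rightarrow> nat)) set" where
  "disjoint_index_pairs M = {(\<alpha>, \<beta>).
     (\<forall>r r'. r \<noteq> r' \<longrightarrow> {\<alpha> r, \<beta> r} \<inter> {\<alpha> r', \<beta> r'} = {}) \<and>
     (\<forall>i. \<alpha> (Inr i) \<noteq> \<beta> (Inr i)) \<and> (\<forall>r. \<alpha> r < M \<and> \<beta> r < M)}"

definition generic_frame :: "nat \<Rightarrow> (nat \<Rightarrow> 'n::finite \<Rightarrow> real) \<Rightarrow> bool" where
  "generic_frame M w \<longleftrightarrow>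
     (\<forall>\<sigma> :: 'n \<Rightarrow> nat. inj \<sigma> \<and> (\<forall>r. \<sigma> r < M) \<longrightarrow> det (frame_rows w \<sigma>) \<noteq> 0) \<and>
     (\<forall>(\<alpha>, \<beta>) \<in> disjoint_index_pairs M. det (frame_pair_rows w \<alpha> \<beta>) \<noteq> 0)"

lemma AE_gauss_frame_det_nonzero:
  fixes A :: "(nat \<Rightarrow> 'n::finite \<Rightarrow> real) \<Rightarrow> real^'m::finite^'m"
  assumes "\<And>r c. (\<lambda>w. A w $ r $ c) \<in> polynomial_in (\<lambda>(j, i) w. w j i)"
    and "\<And>w w'. (\<forall>j<M. w j = w' j) \<Longrightarrow> A w = A w'" and "det (A w0) \<noteq> 0"
  shows "AE w in gauss_frame_space M. det (A w) \<noteq> 0"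
  by (rule AE_gauss_frame_polynomial_nonzero[OF polynomial_in_det[OF assms(1)] _ assms(3)])
    (metis assms(2))

lemma ex_det_frame_rows_nonzero:
  fixes \<sigma> :: "'n::finite \<Rightarrow> nat"
  assumes "inj \<sigma>"
  shows "\<exists>w. det (frame_rows w \<sigma>) \<noteq> 0"
proof
  define w :: "nat \<Rightarrow> 'n \<Rightarrow> real" where "w j c = (if j = \<sigma> c then 1 else 0)" for j c
  have "frame_rows w \<sigma> = mat 1"
    using assms by (auto simp: vec_eq_iff mat_def frame_rows_def frame_vec_def w_def inj_eq)
  then show "det (frame_rows w \<sigma>) \<noteq> 0" by simp
qed

lemma ex_det_frame_pair_rows_nonzero:
  fixes \<alpha> \<beta> :: "'n::finite + 'n \<Rightarrow> nat"
  assumes "(\<alpha>, \<beta>) \<in> disjoint_index_pairs M"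
  shows "\<exists>w. det (frame_pair_rows w \<alpha> \<beta>) \<noteq> 0"
proof
  have disj: "r = r'" if "c \<in> {\<alpha> r, \<beta> r}" "c \<in> {\<alpha> r', \<beta> r'}" for c r r'
    using assms that unfolding disjoint_index_pairs_def by blast
  then have index_eq_iff: "\<alpha> r = \<alpha> r' \<longleftrightarrow> r = r'" "\<beta> r = \<beta> r' \<longleftrightarrow> r = r'" for r r'
    by blast+
  have index_cross: "\<alpha> r = \<beta> r' \<Longrightarrow> r = r'" "\<beta> r = \<alpha> r' \<Longrightarrow> r = r'" for r r'
    using disj by blast+
  have diag: "\<alpha> (Inr i) \<noteq> \<beta> (Inr i)" for i
    using assms unfolding disjoint_index_pairs_def by blast
  \<comment> \<open>Rows \<open>Inl i\<close> become \<open>(e\<^sub>i, -e\<^sub>i)\<close> and rows \<open>Inr i\<close> become \<open>(0, e\<^sub>i)\<close>.\<close>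
  define w :: "nat \<Rightarrow> 'n \<Rightarrow> real" where "w j c =
     (if j = \<alpha> (Inl c) \<or> j = \<beta> (Inl c) then 1 else if j = \<beta> (Inr c) then -1 else 0)" for j c
  have w_Inl: "w (\<alpha> (Inl i)) c = of_bool (c = i)" "w (\<beta> (Inl i)) c = of_bool (c = i)" for i c
    unfolding w_def by (auto simp: index_eq_iff dest: index_cross)
  have w_Inr: "w (\<alpha> (Inr i)) c = 0" "w (\<beta> (Inr i)) c = - of_bool (c = i)" for i c
    using diag unfolding w_def by (auto simp: index_eq_iff dest: index_cross)
  have row_Inl: "(frame_pair_rows w \<alpha> \<beta> *v z) $ Inl i = z $ Inl i - z $ Inr i" for z i
    by (simp add: matrix_vector_mult_def frame_pair_rows_def sum_UNIV_sum_type w_Inl sum_negf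
        of_bool_def if_distrib[of "\<lambda>x. x * _"] cong: if_cong)
  have row_Inr: "(frame_pair_rows w \<alpha> \<beta> *v z) $ Inr i = z $ Inr i" for z i
    by (simp add: matrix_vector_mult_def frame_pair_rows_def sum_UNIV_sum_type w_Inr sum_negf
        of_bool_def if_distrib[of "\<lambda>x. x * _"] cong: if_cong)
  show "det (frame_pair_rows w \<alpha> \<beta>) \<noteq> 0"
    unfolding det_nonzero_iff_trivial_kernel
  proof (intro allI impI)
    fix z assume "frame_pair_rows w \<alpha> \<beta> *v z = 0"
    then have "z $ Inl i = z $ Inr i" "z $ Inr i = 0" for i
      using row_Inl[of z i] row_Inr[of z i] by simp_all
    then show "z = 0"
      by (simp add: vec_eq_iff) (metis sum.exhaust)
  qed
qed

lemma AE_det_frame_rows_nonzero: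
  fixes \<sigma> :: "'n::finite \<Rightarrow> nat"
  assumes "inj \<sigma>" and "\<And>r. \<sigma> r < M"
  shows "AE w in gauss_frame_space M. det (frame_rows w \<sigma>) \<noteq> 0"
proof -
  obtain w0 where "det (frame_rows w0 \<sigma>) \<noteq> 0"
    using ex_det_frame_rows_nonzero[OF assms(1)] by blast
  then show ?thesis
    using assms(2) by (intro AE_gauss_frame_det_nonzero)
      (auto simp: frame_rows_def frame_vec_def vec_eq_iff polynomial_in_frame_coordinate)
qed

lemma AE_det_frame_pair_rows_nonzero:
  fixes \<alpha> \<beta> :: "'n::finite + 'n \<Rightarrow> nat"
  assumes "(\<alpha>, \<beta>) \<in> disjoint_index_pairs M"
  shows "AE w in gauss_frame_space M. det (frame_pair_rows w \<alpha> \<beta>) \<noteq> 0"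
proof -
  obtain w0 where "det (frame_pair_rows w0 \<alpha> \<beta>) \<noteq> 0"
    using ex_det_frame_pair_rows_nonzero[OF assms] by blast
  then show ?thesis
  proof (rule AE_gauss_frame_det_nonzero[rotated 2])
    show "(\<lambda>w. frame_pair_rows w \<alpha> \<beta> $ r $ c) \<in> polynomial_in (\<lambda>(j, i) w. w j i)" for r c
      by (cases c) (auto simp: frame_pair_rows_def polynomial_in_frame_coordinate
          intro: polynomial_in_uminus)
    show "frame_pair_rows w \<alpha> \<beta> = frame_pair_rows w' \<alpha> \<beta>" if "\<forall>j<M. w j = w' j" for w w'
      using that assms by (auto simp: frame_pair_rows_def disjoint_index_pairs_def vec_eq_iff
          split: sum.split)
  qed
qed

lemma AE_generic_frame: "AE w in gauss_frame_space M. generic_frame M w"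
proof -
  have "AE w in gauss_frame_space M. \<forall>\<sigma> \<in> {\<sigma> :: 'n::finite \<Rightarrow> nat. inj \<sigma> \<and> (\<forall>r. \<sigma> r < M)}.
          det (frame_rows w \<sigma>) \<noteq> 0"
    by (rule AE_finite_allI) (auto intro: finite_subset[OF _ finite_bounded_maps]
        AE_det_frame_rows_nonzero)
  moreover have "AE w in gauss_frame_space M.
      \<forall>(\<alpha>, \<beta>) \<in> (disjoint_index_pairs M :: (('n::finite + 'n \<Rightarrow> nat) \<times> _) set).
        det (frame_pair_rows w \<alpha> \<beta>) \<noteq> 0"
  proof (rule AE_finite_allI)
    show "finite (disjoint_index_pairs M :: (('n + 'n \<Rightarrow> nat) \<times> _) set)"
      by (rule finite_subset[OF _ finite_cartesian_product[OF finite_bounded_maps finite_bounded_maps]])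
        (auto simp: disjoint_index_pairs_def)
  qed (auto intro: AE_det_frame_pair_rows_nonzero)
  ultimately show ?thesis
    unfolding generic_frame_def by eventually_elim blast
qed

section \<open>Injectivity of the maxout operator\<close>

lemma maxout_eq_obtains_argmax:
  fixes f :: "nat \<Rightarrow> real^'n::finite"
  assumes "maxout I K f x = maxout I K f y"
    and "\<And>k. k < K \<Longrightarrow> finite (I k) \<and> I k \<noteq> {}"
  obtains a b where "\<And>k. k < K \<Longrightarrow> a k \<in> I k \<and> b k \<in> I k \<and> x \<bullet> f (a k) = y \<bullet> f (b k)"
proof -
  have argmax: "\<exists>a. \<forall>k<K. a k \<in> I k \<and> v \<bullet> f (a k) = Max ((\<lambda>j. v \<bullet> f j) ` I k)" for v
  proof -
    have "Max ((\<lambda>j. v \<bullet> f j) ` I k) \<in> (\<lambda>j. v \<bullet> f j) ` I k" if "k < K" for k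
      using assms(2)[OF that] by (intro Max_in) auto
    then have "\<exists>j \<in> I k. v \<bullet> f j = Max ((\<lambda>j. v \<bullet> f j) ` I k)" if "k < K" for k
      using that by force
    then show ?thesis by metis
  qed
  obtain a where a: "\<forall>k<K. a k \<in> I k \<and> x \<bullet> f (a k) = Max ((\<lambda>j. x \<bullet> f j) ` I k)"
    using argmax by blast
  obtain b where b: "\<forall>k<K. b k \<in> I k \<and> y \<bullet> f (b k) = Max ((\<lambda>j. y \<bullet> f j) ` I k)"
    using argmax by blast
  have max_eq: "Max ((\<lambda>j. x \<bullet> f j) ` I k) = Max ((\<lambda>j. y \<bullet> f j) ` I k)" if "k < K" for k
    using fun_cong[OF assms(1), of k] that by (simp add: maxout_def)
  show thesis
  proof (rule that)
    fix k assume "k < K"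
    then show "a k \<in> I k \<and> b k \<in> I k \<and> x \<bullet> f (a k) = y \<bullet> f (b k)"
      using a b max_eq[OF \<open>k < K\<close>] by simp
  qed
qed

lemma obtain_injection_inside_or_outside [consumes 2]:
  fixes T :: "nat set"
  assumes "T \<subseteq> {..<K}" and "2 * CARD('n::finite) \<le> K"
  obtains (inside) \<sigma> :: "'n::finite \<Rightarrow> nat" where "inj \<sigma>" "range \<sigma> \<subseteq> T"
  | (outside) \<rho> :: "'n::finite + 'n \<Rightarrow> nat"
    where "inj \<rho>" "range \<rho> \<subseteq> {..<K}" "\<rho> ` range Inr \<inter> T = {}"
proof (cases "CARD('n) \<le> card T")
  case True
  then show thesis
    using card_le_inj[of "UNIV :: 'n set" T] finite_subset[OF assms(1)] inside by auto
next
  case False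
  have "card ({..<K} - T) = K - card T"
    using assms(1) by (simp add: card_Diff_subset finite_subset)
  with False assms(2) have "CARD('n) \<le> card ({..<K} - T)" by linarith
  then obtain \<tau>\<^sub>2 :: "'n \<Rightarrow> nat" where \<tau>\<^sub>2: "inj \<tau>\<^sub>2" "range \<tau>\<^sub>2 \<subseteq> {..<K} - T"
    using card_le_inj[of "UNIV :: 'n set" "{..<K} - T"] by auto
  have "card ({..<K} - range \<tau>\<^sub>2) = K - CARD('n)"
    using \<tau>\<^sub>2 by (subst card_Diff_subset) (auto simp: card_image)
  with assms(2) have "CARD('n) \<le> card ({..<K} - range \<tau>\<^sub>2)" by linarith
  then obtain \<tau>\<^sub>1 :: "'n \<Rightarrow> nat" where \<tau>\<^sub>1: "inj \<tau>\<^sub>1" "range \<tau>\<^sub>1 \<subseteq> {..<K} - range \<tau>\<^sub>2"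
    using card_le_inj[of "UNIV :: 'n set" "{..<K} - range \<tau>\<^sub>2"] by auto
  show thesis
  proof (rule outside[of "case_sum \<tau>\<^sub>1 \<tau>\<^sub>2"])
    show "inj (case_sum \<tau>\<^sub>1 \<tau>\<^sub>2)"
      using \<tau>\<^sub>1 \<tau>\<^sub>2 by (auto simp: inj_def split: sum.split) blast+
  qed (use \<tau>\<^sub>1 \<tau>\<^sub>2 in \<open>auto simp: image_subset_iff split: sum.split\<close>)
qed

lemma frame_rows_eq_imp_eq:
  assumes "det (frame_rows w \<sigma>) \<noteq> 0" and "\<And>r. x \<bullet> frame_vec w (\<sigma> r) = y \<bullet> frame_vec w (\<sigma> r)"
  shows "x = y"
proof -
  have "(frame_rows w \<sigma> *v v) $ r = v \<bullet> frame_vec w (\<sigma> r)" for v r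
    by (simp add: frame_rows_def matrix_vector_mult_def inner_vec_def mult.commute)
  then have "frame_rows w \<sigma> *v (x - y) = 0"
    using assms(2) by (simp add: vec_eq_iff inner_diff_left)
  then have "x - y = 0"
    using assms(1) unfolding det_nonzero_iff_trivial_kernel by blast
  then show ?thesis by simp
qed

lemma frame_pair_rows_eq_imp_zero:
  fixes x y :: "real^'n::finite"
  assumes "det (frame_pair_rows w \<alpha> \<beta>) \<noteq> 0"
    and "\<And>r. x \<bullet> frame_vec w (\<alpha> r) = y \<bullet> frame_vec w (\<beta> r)"
  shows "x = 0 \<and> y = 0"
proof -
  define z :: "real^('n + 'n)" where "z = (\<chi> c. case c of Inl i \<Rightarrow> x $ i | Inr i \<Rightarrow> y $ i)"
  have "(frame_pair_rows w \<alpha> \<beta> *v z) $ r = x \<bullet> frame_vec w (\<alpha> r) - y \<bullet> frame_vec w (\<beta> r)" for r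
    by (simp add: matrix_vector_mult_def frame_pair_rows_def z_def sum_UNIV_sum_type inner_vec_def
        frame_vec_def sum_negf mult.commute)
  then have "frame_pair_rows w \<alpha> \<beta> *v z = 0"
    using assms(2) by (simp add: vec_eq_iff)
  then have "z = 0"
    using assms(1) unfolding det_nonzero_iff_trivial_kernel by blast
  then have "x $ i = 0" "y $ i = 0" for i
    unfolding z_def vec_eq_iff by (metis sum.case vec_lambda_beta zero_index)+
  then show ?thesis by (simp add: vec_eq_iff)
qed

lemma inj_maxout_if_generic_frame:
  fixes I :: "nat \<Rightarrow> nat set" and w :: "nat \<Rightarrow> 'n::finite \<Rightarrow> real"
  assumes "disjoint_family_on I {..<K}" and "\<And>k. k < K \<Longrightarrow> I k \<subseteq> {..<M}"
    and "\<And>k. k < K \<Longrightarrow> finite (I k) \<and> I k \<noteq> {}" and "2 * CARD('n) \<le> K"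
    and "generic_frame M w"
  shows "inj (maxout I K (frame_vec w))"
proof (rule injI)
  fix x y assume "maxout I K (frame_vec w) x = maxout I K (frame_vec w) y"
  then obtain a b where ab: "\<And>k. k < K \<Longrightarrow>
      a k \<in> I k \<and> b k \<in> I k \<and> x \<bullet> frame_vec w (a k) = y \<bullet> frame_vec w (b k)"
    using maxout_eq_obtains_argmax assms(3) by blast
  have same_pool: "k = k'" if "k < K" "k' < K" "j \<in> {a k, b k}" "j \<in> {a k', b k'}" for j k k'
  proof (rule ccontr)
    assume "k \<noteq> k'"
    then have "I k \<inter> I k' = {}" using disjoint_family_onD[OF assms(1)] that(1,2) by simp
    moreover have "j \<in> I k" "j \<in> I k'" using ab[OF that(1)] ab[OF that(2)] that(3,4) by auto
    ultimately show False by blast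
  qed
  have bounded: "a k < M" "b k < M" if "k < K" for k
    using ab[OF that] assms(2)[OF that] by auto
  have "{k. k < K \<and> a k = b k} \<subseteq> {..<K}" by auto
  then show "x = y"
    using assms(4)
  proof (cases rule: obtain_injection_inside_or_outside)
    case (inside \<sigma>)
    then have \<sigma>: "\<sigma> r < K" "a (\<sigma> r) = b (\<sigma> r)" for r by auto
    have "inj (a \<circ> \<sigma>)"
    proof (rule injI)
      fix r r' assume "(a \<circ> \<sigma>) r = (a \<circ> \<sigma>) r'"
      then have "\<sigma> r = \<sigma> r'" using same_pool[OF \<sigma>(1) \<sigma>(1), of "a (\<sigma> r)" r r'] by simp
      then show "r = r'" using \<open>inj \<sigma>\<close> by (simp add: inj_eq)
    qed
    then have "det (frame_rows w (a \<circ> \<sigma>)) \<noteq> 0"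
      using assms(5) bounded(1)[OF \<sigma>(1)] by (simp add: generic_frame_def)
    moreover have "x \<bullet> frame_vec w ((a \<circ> \<sigma>) r) = y \<bullet> frame_vec w ((a \<circ> \<sigma>) r)" for r
      using ab[OF \<sigma>(1)] \<sigma>(2) by simp
    ultimately show ?thesis by (rule frame_rows_eq_imp_eq)
  next
    case (outside \<rho>)
    then have \<rho>: "\<rho> r < K" "a (\<rho> (Inr i)) \<noteq> b (\<rho> (Inr i))" for r i by blast+
    have "{a (\<rho> r), b (\<rho> r)} \<inter> {a (\<rho> r'), b (\<rho> r')} = {}" if "r \<noteq> r'" for r r'
    proof -
      have "\<rho> r \<noteq> \<rho> r'" using \<open>inj \<rho>\<close> that by (simp add: inj_eq)
      then show ?thesis using same_pool[OF \<rho>(1) \<rho>(1)] by blast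
    qed
    then have "(a \<circ> \<rho>, b \<circ> \<rho>) \<in> disjoint_index_pairs M"
      using \<rho> bounded unfolding disjoint_index_pairs_def by simp
    then have "det (frame_pair_rows w (a \<circ> \<rho>) (b \<circ> \<rho>)) \<noteq> 0"
      using assms(5) by (auto simp: generic_frame_def)
    moreover have "x \<bullet> frame_vec w ((a \<circ> \<rho>) r) = y \<bullet> frame_vec w ((b \<circ> \<rho>) r)" for r
      using ab[OF \<rho>(1)] by simp
    ultimately have "x = 0 \<and> y = 0" by (rule frame_pair_rows_eq_imp_zero)
    then show ?thesis by simp
  qed
qed

theorem proposition6:
  fixes K L M :: nat and I :: "nat \<Rightarrow> nat set"
  assumes "M = K * L"
    and "L \<ge> 1"
    and "disjoint_family_on I {..<K}"
    and "(\<Union>k<K. I k) = {..<M}"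
    and "\<forall>k<K. card (I k) = L"
    and "K \<ge> 2 * CARD('n::finite) + 1"
  shows "AE \<omega> in (gauss_frame_space M :: (nat \<Rightarrow> 'n \<Rightarrow> real) measure).
           inj (maxout I K (frame_vec \<omega>))"
  using AE_generic_frame
proof (rule AE_mp, intro AE_I2 impI)
  fix \<omega> :: "nat \<Rightarrow> 'n \<Rightarrow> real" assume "generic_frame M \<omega>"
  moreover have "finite (I k) \<and> I k \<noteq> {}" if "k < K" for k
    using assms(2,5) that by (auto intro: card_ge_0_finite)
  moreover have "I k \<subseteq> {..<M}" if "k < K" for k
    using assms(4) that by blast
  ultimately show "inj (maxout I K (frame_vec \<omega>))"
    using assms(3,6) by (intro inj_maxout_if_generic_frame) auto
qed

end
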